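(* Let $L$ be a distributive lattice with generated Boolean algebra $B$, $n\ge1$, $a_i,b_i\in L$ with $a_i<b_i$ for $i\in[n]$, $\widehat{\mathbf e}_I\in L^n$ ($I\subseteq[n]$) the tuple with $i$-th component $b_i$ if $i\in I$ and $a_i$ otherwise, $D=\{\widehat{\mathbf e}_I:I\subseteq[n]\}$, and $f\colon D\to L$ monotone and satisfying $$f(\widehat{\mathbf e}_{I\cup\{k\}})\wedge a_k\le f(\widehat{\mathbf e}_I)\le f(\widehat{\mathbf e}_{I\setminus\{k\}})\vee b_k\quad\text{for all } I\subseteq[n],\ k\in[n].$$ Then $p^-(\widehat{\mathbf e}_J)\ge f(\widehat{\mathbf e}_J)$ for all $J\subseteq[n]$.
   Context: $B$ is the Boolean algebra generated by $L$ (with $L$ embedded), with complement $x\mapsto x'$. $f$ monotone means $I\subseteq J\Rightarrow f(\widehat{\mathbf e}_I)\le f(\widehat{\mathbf e}_J)$. Define $c_I^-=f(\widehat{\mathbf e}_I)\wedge\bigwedge_{i\notin I}a_i'\in B$ and $p^-(\mathbf x)=\bigvee_{I\subseteq[n]}(c_I^-\wedge\bigwedge_{i\in I}x_i)$, a polynomial function over $B$. *)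

theory Defs
  imports Main
begin

inductive_set bool_gen :: "'b::boolean_algebra set \<Rightarrow> 'b set" for L where
  base: "x \<in> L \<Longrightarrow> x \<in> bool_gen L"
| bot: "bot \<in> bool_gen L"
| top: "top \<in> bool_gen L"
| compl: "x \<in> bool_gen L \<Longrightarrow> - x \<in> bool_gen L"
| inf: "x \<in> bool_gen L \<Longrightarrow> y \<in> bool_gen L \<Longrightarrow> inf x y \<in> bool_gen L"
| sup: "x \<in> bool_gen L \<Longrightarrow> y \<in> bool_gen L \<Longrightarrow> sup x y \<in> bool_gen L"

definition big_meet :: "'i set \<Rightarrow> ('i \<Rightarrow> 'b::boolean_algebra) \<Rightarrow> 'b" where
  "big_meet A g = Finite_Set.fold (\<lambda>i acc. inf (g i) acc) top A"

definition big_join :: "'i set \<Rightarrow> ('i \<Rightarrow> 'b::boolean_algebra) \<Rightarrow> 'b" where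
  "big_join A g = Finite_Set.fold (\<lambda>i acc. sup (g i) acc) bot A"

definition ehat :: "(nat \<Rightarrow> 'b) \<Rightarrow> (nat \<Rightarrow> 'b) \<Rightarrow> nat set \<Rightarrow> (nat \<Rightarrow> 'b)" where
  "ehat a b I = (\<lambda>i. if i \<in> I then b i else a i)"

definition cminus :: "nat \<Rightarrow> (nat \<Rightarrow> 'b::boolean_algebra) \<Rightarrow> (nat \<Rightarrow> 'b) \<Rightarrow> ((nat \<Rightarrow> 'b) \<Rightarrow> 'b) \<Rightarrow> nat set \<Rightarrow> 'b" where
  "cminus n a b f I = inf (f (ehat a b I)) (big_meet ({1..n} - I) (\<lambda>i. - a i))"

definition pminus :: "nat \<Rightarrow> (nat \<Rightarrow> 'b::boolean_algebra) \<Rightarrow> (nat \<Rightarrow> 'b) \<Rightarrow> ((nat \<Rightarrow> 'b) \<Rightarrow> 'b) \<Rightarrow> (nat \<Rightarrow> 'b) \<Rightarrow> 'b" where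
  "pminus n a b f x = big_join (Pow {1..n}) (\<lambda>I. inf (cminus n a b f I) (big_meet I x))"

end

theory Submission
  imports Defs
begin

(*
  Cut the top element into the finitely many pieces x that lie below each a_i or its
  complement and below each b_i or its complement. On such a piece put
  K = {i. x <= a_i}, M = {i. x <= b_i} and I = K \<union> (J \<inter> M). Monotonicity of f followed
  by the right-hand inequality, applied once for every k in J - M (where x <= -b_k), gives
  x \<sqinter> f(e_J) <= f(e_I); moreover x <= -a_i for i \<notin> I, and x is below the i-th component
  of e_J for i \<in> I. Hence x \<sqinter> f(e_J) lies below the I-th term of p^-(e_J), and joining over
  all pieces gives the claim.

  The argument works in any Boolean algebra: it only uses a_i <= b_i, monotonicity of f and
  the right-hand inequality.
*)

lemma big_meet_insert:
  assumes "finite A" "i \<notin> A"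
  shows "big_meet (insert i A) g = inf (g i) (big_meet A g)"
proof -
  interpret comp_fun_commute "\<lambda>i acc. inf (g i) acc :: 'b::boolean_algebra"
    by unfold_locales (simp add: fun_eq_iff inf_left_commute)
  show ?thesis
    unfolding big_meet_def using assms by (rule fold_insert)
qed

lemma big_join_insert:
  assumes "finite A" "i \<notin> A"
  shows "big_join (insert i A) g = sup (g i) (big_join A g)"
proof -
  interpret comp_fun_commute "\<lambda>i acc. sup (g i) acc :: 'b::boolean_algebra"
    by unfold_locales (simp add: fun_eq_iff sup_left_commute)
  show ?thesis
    unfolding big_join_def using assms by (rule fold_insert)
qed

lemma le_big_meetI:
  assumes "finite A" "\<And>i. i \<in> A \<Longrightarrow> x \<le> g i"
  shows "x \<le> big_meet A g"
  using assms
  by (induction A rule: finite_induct) (simp_all add: big_meet_def[of "{}"] big_meet_insert)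

lemma big_join_upper:
  assumes "finite A" "i \<in> A"
  shows "g i \<le> big_join A g"
  using assms
  by (induction A rule: finite_induct) (auto simp: big_join_insert intro: le_supI2)

definition decides :: "'b::boolean_algebra set \<Rightarrow> 'b \<Rightarrow> bool" where
  "decides C x \<longleftrightarrow> (\<forall>c\<in>C. x \<le> c \<or> x \<le> - c)"

lemma decides_antimono: "decides C x \<Longrightarrow> y \<le> x \<Longrightarrow> decides C y"
  unfolding decides_def by (meson order_trans)

lemma le_if_le_on_deciding:
  fixes z y :: "'b::boolean_algebra"
  assumes "finite C" "\<And>x. decides C x \<Longrightarrow> inf x z \<le> y"
  shows "z \<le> y"
  using assms
proof (induction C arbitrary: z rule: finite_induct)
  case empty
  then show ?case by (metis decides_def empty_iff inf_top_left)
next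
  case (insert c C)
  have "inf z d \<le> y" if d: "d = c \<or> d = - c" for d
  proof (rule insert.IH)
    fix x assume "decides C x"
    then have "decides C (inf x d)" by (rule decides_antimono) simp
    moreover have "inf x d \<le> c \<or> inf x d \<le> - c" using d by auto
    ultimately have "decides (insert c C) (inf x d)" by (simp add: decides_def)
    then have "inf (inf x d) z \<le> y" by (rule insert.prems)
    then show "inf x (inf z d) \<le> y" by (simp add: ac_simps)
  qed
  then have "sup (inf z c) (inf z (- c)) \<le> y" by simp
  then show ?case by (simp add: inf_sup_distrib1[symmetric])
qed

lemma inf_le_if_le_sup_compl:
  fixes x y z c :: "'b::boolean_algebra"
  assumes "x \<le> - c" "y \<le> sup z c"
  shows "inf x y \<le> z"
proof -
  have "inf x y \<le> inf (- c) (sup z c)" using assms by (rule inf_mono)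
  also have "\<dots> \<le> z" by (simp add: inf_sup_distrib1)
  finally show ?thesis .
qed

lemma inf_le_remove_set:
  fixes g :: "nat set \<Rightarrow> 'b::boolean_algebra"
  assumes step: "\<And>S k. S \<subseteq> U \<Longrightarrow> k \<in> U \<Longrightarrow> g S \<le> sup (g (S - {k})) (b k)"
    and "finite R" "R \<subseteq> U" "S \<subseteq> U" "\<And>k. k \<in> R \<Longrightarrow> x \<le> - b k"
  shows "inf x (g S) \<le> g (S - R)"
  using assms(2-)
proof (induction R rule: finite_induct)
  case empty
  then show ?case by simp
next
  case (insert k R)
  have "inf x (g S) \<le> inf x (g (S - R))"
    using insert by simp
  also have "\<dots> \<le> g (S - R - {k})"
  proof (rule inf_le_if_le_sup_compl)
    show "x \<le> - b k" using insert.prems by simp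
    show "g (S - R) \<le> sup (g (S - R - {k})) (b k)"
      using insert.hyps insert.prems by (intro step) auto
  qed
  also have "S - R - {k} = S - insert k R" by blast
  finally show ?case .
qed

lemma inf_le_pminus_if_decides:
  fixes a b :: "nat \<Rightarrow> 'b::boolean_algebra" and f :: "(nat \<Rightarrow> 'b) \<Rightarrow> 'b"
  assumes ab: "\<And>i. i \<in> {1..n} \<Longrightarrow> a i \<le> b i"
    and f_mono: "\<And>I J. I \<subseteq> J \<Longrightarrow> J \<subseteq> {1..n} \<Longrightarrow> f (ehat a b I) \<le> f (ehat a b J)"
    and f_upper: "\<And>I k. I \<subseteq> {1..n} \<Longrightarrow> k \<in> {1..n} \<Longrightarrow>
        f (ehat a b I) \<le> sup (f (ehat a b (I - {k}))) (b k)"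
    and J: "J \<subseteq> {1..n}"
    and x: "decides (a ` {1..n} \<union> b ` {1..n}) x"
  shows "inf x (f (ehat a b J)) \<le> pminus n a b f (ehat a b J)"
proof -
  define K where "K = {i \<in> {1..n}. x \<le> a i}"
  define M where "M = {i \<in> {1..n}. x \<le> b i}"
  define I where "I = K \<union> (J \<inter> M)"
  have K_M: "K \<subseteq> M"
    using ab unfolding K_def M_def by (auto intro: order_trans)
  have I_sub: "I \<subseteq> {1..n}"
    using J unfolding I_def K_def by auto
  have "f (ehat a b J) \<le> f (ehat a b (J \<union> K))"
    using J by (intro f_mono) (auto simp: K_def)
  then have "inf x (f (ehat a b J)) \<le> inf x (f (ehat a b (J \<union> K)))"
    by (rule inf_mono[OF order_refl])
  also have "\<dots> \<le> f (ehat a b (J \<union> K - (J - M)))"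
  proof (rule inf_le_remove_set[where U = "{1..n}"])
    show "finite (J - M)" using J finite_subset by blast
    show "x \<le> - b k" if "k \<in> J - M" for k
      using x that J unfolding decides_def M_def by auto
  qed (use f_upper J in \<open>auto simp: K_def\<close>)
  also have "J \<union> K - (J - M) = I"
    using K_M unfolding I_def by auto
  finally have f_I: "inf x (f (ehat a b J)) \<le> f (ehat a b I)" .
  have "x \<le> big_meet ({1..n} - I) (\<lambda>i. - a i)"
    using x unfolding decides_def I_def K_def by (intro le_big_meetI) auto
  then have "inf x (f (ehat a b J)) \<le> cminus n a b f I"
    unfolding cminus_def using f_I by (simp add: le_infI1)
  moreover have "x \<le> big_meet I (ehat a b J)"
  proof (rule le_big_meetI)
    show "finite I" using I_sub finite_subset by blast
    show "x \<le> ehat a b J i" if "i \<in> I" for i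
      using that ab unfolding I_def K_def M_def ehat_def by (auto intro: order_trans)
  qed
  ultimately have "inf x (f (ehat a b J)) \<le> inf (cminus n a b f I) (big_meet I (ehat a b J))"
    by (simp add: le_infI1)
  also have "\<dots> \<le> pminus n a b f (ehat a b J)"
    unfolding pminus_def using I_sub by (intro big_join_upper) auto
  finally show ?thesis .
qed

theorem lemma3p4:
  fixes L :: "'b::boolean_algebra set" and n :: nat
    and a b :: "nat \<Rightarrow> 'b" and f :: "(nat \<Rightarrow> 'b) \<Rightarrow> 'b"
  assumes L_inf: "\<And>x y. x \<in> L \<Longrightarrow> y \<in> L \<Longrightarrow> inf x y \<in> L"
    and L_sup: "\<And>x y. x \<in> L \<Longrightarrow> y \<in> L \<Longrightarrow> sup x y \<in> L"
    and B_gen: "bool_gen L = UNIV"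
    and n_pos: "n \<ge> 1"
    and a_L: "\<And>i. i \<in> {1..n} \<Longrightarrow> a i \<in> L"
    and b_L: "\<And>i. i \<in> {1..n} \<Longrightarrow> b i \<in> L"
    and ab: "\<And>i. i \<in> {1..n} \<Longrightarrow> a i < b i"
    and f_L: "\<And>I. I \<subseteq> {1..n} \<Longrightarrow> f (ehat a b I) \<in> L"
    and f_mono: "\<And>I J. I \<subseteq> J \<Longrightarrow> J \<subseteq> {1..n} \<Longrightarrow> f (ehat a b I) \<le> f (ehat a b J)"
    and f_cond: "\<And>I k. I \<subseteq> {1..n} \<Longrightarrow> k \<in> {1..n} \<Longrightarrow>
        inf (f (ehat a b (I \<union> {k}))) (a k) \<le> f (ehat a b I)
      \<and> f (ehat a b I) \<le> sup (f (ehat a b (I - {k}))) (b k)"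
  shows "\<forall>J. J \<subseteq> {1..n} \<longrightarrow> f (ehat a b J) \<le> pminus n a b f (ehat a b J)"
proof (intro allI impI)
  fix J assume J: "J \<subseteq> {1..n}"
  have "finite (a ` {1..n} \<union> b ` {1..n})" by simp
  then show "f (ehat a b J) \<le> pminus n a b f (ehat a b J)"
  proof (rule le_if_le_on_deciding)
    fix x assume "decides (a ` {1..n} \<union> b ` {1..n}) x"
    then show "inf x (f (ehat a b J)) \<le> pminus n a b f (ehat a b J)"
      using ab f_mono f_cond J by (intro inf_le_pminus_if_decides) (auto intro: less_imp_le)
  qed
qed

end
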